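(* For every positive integer $n$, the number of circular permutations of $[n]=\{1,2,\ldots,n\}$ that avoid the pattern $1234$ equals $2^{n}+1-2n-\binom{n}{3}$.
   Context: A circular permutation of $[n]$ is an arrangement of $1,2,\ldots,n$ clockwise around a circle, two arrangements being identified if they differ by a rotation. Equivalently, it can be represented uniquely as a linear permutation $\pi_1\pi_2\cdots\pi_n$ of $[n]$ with $\pi_n=n$, whose rotations all represent the same circular permutation. The reduced form of a sequence of distinct positive integers is obtained by replacing its smallest entry by $1$, its next smallest by $2$, and so on; a pattern is such a reduced form. An occurrence of a pattern $\tau$ of length $m$ in a circular permutation $\pi$ is a sequence of $m$ letters of $\pi$ read in clockwise order and lying within one revolution (i.e., a subsequence of some rotation of the linear representation) whose reduced form is $\tau$; $\pi$ avoids $\tau$ if it has no occurrence of $\tau$. Here $\binom{n}{3}=0$ for $n<3$. *)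

theory Defs
  imports Main
begin

definition reduced_form :: "nat list \<Rightarrow> nat list" where
  "reduced_form xs = map (\<lambda>x. card {y \<in> set xs. y \<le> x}) xs"

text \<open>Circular permutations of [n], represented uniquely by linear permutations
  pi_1 ... pi_n of 1..n with pi_n = n.\<close>
definition circ_perms :: "nat \<Rightarrow> nat list set" where
  "circ_perms n = {\<pi>. distinct \<pi> \<and> set \<pi> = {1..n} \<and> last \<pi> = n}"

definition circ_occurs :: "nat list \<Rightarrow> nat list \<Rightarrow> bool" where
  "circ_occurs \<tau> \<pi> \<longleftrightarrow> (\<exists>k ys. ys \<in> set (subseqs (rotate k \<pi>)) \<and> reduced_form ys = \<tau>)"

definition circ_avoids :: "nat list \<Rightarrow> nat list \<Rightarrow> bool" where
  "circ_avoids \<tau> \<pi> \<longleftrightarrow> \<not> circ_occurs \<tau> \<pi>"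

end

theory Submission
  imports Defs "HOL-Library.Sublist"
begin

text \<open>Write a circular permutation of \<open>[n]\<close> as \<open>s @ [n]\<close>. Since \<open>n\<close> is the largest letter,
  an occurrence of 1234 in a rotation either uses \<open>n\<close>, which then plays the 4 and is preceded
  by a 123 of \<open>s\<close>, or lies in \<open>s\<close> read cyclically, and then \<open>s\<close> contains 123 or 3412. So we
  count the permutations of \<open>[m]\<close>, \<open>m = n - 1\<close>, avoiding 123 and 3412.

  Split such a permutation at its maximum, \<open>a @ m # b\<close>. If \<open>a = []\<close>, then \<open>b\<close> is any
  permutation of \<open>[m - 1]\<close> of the same kind. Otherwise it avoids both patterns iff \<open>a\<close> is
  decreasing and every ascent \<open>x < y\<close> of \<open>b\<close> straddles \<open>a\<close>: \<open>x < min a\<close> and \<open>max a < y\<close>.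
  Either \<open>b\<close> is decreasing (\<open>2^(m-1) - 1\<close> choices of the nonempty set of letters of \<open>a\<close>),
  or \<open>b\<close> has an ascent; then \<open>a\<close> is an interval and \<open>b\<close> is any shuffle of the decreasing
  runs of the letters below and above it, except the decreasing one, which was counted before.
  This gives the recurrence \<open>f m = f (m - 1) + 2^m - 2 - (m choose 2)\<close>, solved by the closed form.\<close>

section \<open>Subsequences, decreasing lists and shuffles\<close>

lemma set_mono_subseq: "subseq xs ys \<Longrightarrow> set xs \<subseteq> set ys"
  by (induction rule: list_emb.induct) auto

lemma subseq_pair_distinct: "subseq [x,y] xs \<Longrightarrow> distinct xs \<Longrightarrow> x \<noteq> y"
  using subseqs_distinctD[of "[x,y]" xs] by simp

lemma subseq_pair_replace:
  "subseq [x,y] xs \<Longrightarrow> z \<in> set xs \<Longrightarrow> z \<noteq> x \<Longrightarrow> z \<noteq> y \<Longrightarrow> subseq [z,y] xs \<or> subseq [x,z] xs"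
proof (induction xs)
  case (Cons w ws)
  then show ?case
    by (auto simp: subseq_singleton_left split: if_splits dest: set_mono_subseq)
qed simp

lemma subseq_snoc_iff:
  "subseq w (s @ [n]) \<longleftrightarrow> subseq w s \<or> (\<exists>w'. w = w' @ [n] \<and> subseq w' s)"
proof
  assume "subseq w (s @ [n])"
  then obtain w1 w2 where "w = w1 @ w2" "subseq w1 s" "subseq w2 [n]"
    by (rule subseq_appendE)
  moreover from \<open>subseq w2 [n]\<close> have "w2 = [] \<or> w2 = [n]"
    by (cases w2) (auto split: if_splits)
  ultimately show "subseq w s \<or> (\<exists>w'. w = w' @ [n] \<and> subseq w' s)" by auto
qed (auto intro: subseq_rev_drop_many)

lemma subseq_rotateE:
  assumes "subseq w (rotate k xs)"
  obtains j where "subseq (rotate j w) xs"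
proof -
  define r where "r = k mod length xs"
  from assms obtain w1 w2 where w: "w = w1 @ w2" "subseq w1 (drop r xs)" "subseq w2 (take r xs)"
    unfolding r_def rotate_drop_take by (rule subseq_appendE)
  then have "subseq (w2 @ w1) (take r xs @ drop r xs)"
    by (intro list_emb_append_mono)
  then have "subseq (rotate (length w1) w) xs"
    by (simp add: w rotate_append)
  then show thesis by (rule that)
qed

lemma rotate_four_cases:
  "rotate j [a,b,c,d] \<in> {[a,b,c,d], [b,c,d,a], [c,d,a,b], [d,a,b,c]}"
proof -
  have r: "rotate j [a,b,c,d] = rotate (j mod 4) [a,b,c,d]"
    using rotate_conv_mod[of j "[a,b,c,d]"] by simp
  have "j mod 4 < 4" by simp
  then consider "j mod 4 = 0" | "j mod 4 = 1" | "j mod 4 = 2" | "j mod 4 = 3" by linarith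
  then show ?thesis
    by cases (simp_all add: r numeral_2_eq_2 numeral_3_eq_3)
qed

lemma sorted_wrt_subseq: "subseq xs ys \<Longrightarrow> sorted_wrt R ys \<Longrightarrow> sorted_wrt R xs"
  by (induction rule: list_emb.induct) (auto dest: set_mono_subseq)

lemma sorted_wrt_iff_subseq_pairs: "sorted_wrt R xs \<longleftrightarrow> (\<forall>x y. subseq [x,y] xs \<longrightarrow> R x y)"
proof (induction xs)
  case (Cons z zs)
  have "subseq [x,y] (z # zs) \<longleftrightarrow> x = z \<and> y \<in> set zs \<or> subseq [x,y] zs" for x y
    by (auto simp: subseq_singleton_left dest: set_mono_subseq)
  with Cons.IH show ?case
    by auto
qed simp

lemma distinct_if_sorted_wrt_greater: "sorted_wrt (>) xs \<Longrightarrow> distinct (xs :: 'a::order list)"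
  by (induction xs) auto

lemma sorted_wrt_greater_unique:
  fixes xs ys :: "'a::linorder list"
  assumes "sorted_wrt (>) xs" "sorted_wrt (>) ys" "set xs = set ys"
  shows "xs = ys"
  using strict_sorted_equal[of "rev xs" "rev ys"] assms by (simp add: sorted_wrt_rev)

lemma sorted_wrt_greater_filter:
  fixes b :: "'a::linorder list"
  assumes "distinct b" "\<And>x y. subseq [x,y] b \<Longrightarrow> P x \<Longrightarrow> P y \<Longrightarrow> \<not> x < y"
  shows "sorted_wrt (>) (filter P b)"
  unfolding sorted_wrt_iff_subseq_pairs
proof (intro allI impI)
  fix x y assume xy: "subseq [x,y] (filter P b)"
  have "P x" "P y"
    using set_mono_subseq[OF xy] by auto
  with assms(2)[OF subseq_order.trans[OF xy subseq_filter_left]] have "\<not> x < y" .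
  moreover have "x \<noteq> y"
    using subseq_pair_distinct[OF xy] assms(1) by simp
  ultimately show "y < x" by simp
qed

lemma filter_eq_rev_upt:
  assumes "distinct b" "\<And>x y. subseq [x,y] b \<Longrightarrow> P x \<Longrightarrow> P y \<Longrightarrow> \<not> x < y"
    and "set (filter P b) = {i..<j}"
  shows "filter P b = rev [i..<j]"
  using sorted_wrt_greater_filter[OF assms(1,2)] assms(3)
  by (intro sorted_wrt_greater_unique) (simp_all add: sorted_wrt_rev)

lemma append_in_shuffles: "xs @ ys \<in> shuffles xs ys"
  by (induction xs) (simp_all add: Cons_in_shuffles_leftI)

lemma card_shuffles:
  assumes "set xs \<inter> set ys = {}"
  shows "card (shuffles xs ys) = (length xs + length ys) choose length xs"
  using assms
proof (induction xs ys rule: shuffles.induct)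
  case (3 x xs y ys)
  then have "(#) x ` shuffles xs (y # ys) \<inter> (#) y ` shuffles (x # xs) ys = {}"
    by auto
  then have "card (shuffles (x # xs) (y # ys)) = card (shuffles xs (y # ys)) + card (shuffles (x # xs) ys)"
    by (simp add: card_Un_disjoint card_image)
  also have "\<dots> = (length (x # xs) + length (y # ys)) choose length (x # xs)"
    using "3.prems" by (simp add: "3.IH")
  finally show ?case .
qed simp_all

lemma card_shuffles_not_decreasing:
  fixes xs ys :: "'a::linorder list"
  assumes "sorted_wrt (>) (xs @ ys)"
  shows "card (shuffles xs ys - {zs. sorted_wrt (>) zs}) = ((length xs + length ys) choose length xs) - 1"
proof -
  have "zs = xs @ ys" if "zs \<in> shuffles xs ys" "sorted_wrt (>) zs" for zs
    using that assms by (intro sorted_wrt_greater_unique) (auto dest: set_shuffles)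
  then have "shuffles xs ys \<inter> {zs. sorted_wrt (>) zs} = {xs @ ys}"
    using assms append_in_shuffles by auto
  moreover have "set xs \<inter> set ys = {}"
    using assms by (auto simp: sorted_wrt_append)
  ultimately show ?thesis
    by (simp add: card_Diff_subset_Int card_shuffles)
qed

lemma ascent_in_shuffles:
  fixes xs ys :: "'a::linorder list"
  assumes "zs \<in> shuffles xs ys" "set xs \<inter> set ys = {}" "sorted_wrt (>) xs" "sorted_wrt (>) ys"
    and "subseq [u,v] zs" "u < v"
  shows "u \<in> set xs \<and> v \<in> set ys \<or> u \<in> set ys \<and> v \<in> set xs"
proof -
  have not_both: "\<not> (u \<in> set ws \<and> v \<in> set ws)"
    if "filter (\<lambda>x. x \<in> set ws) zs = ws" "sorted_wrt (>) ws" for ws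
  proof
    assume "u \<in> set ws \<and> v \<in> set ws"
    then have "subseq [u,v] ws"
      using subseq_filter[OF assms(5), of "\<lambda>x. x \<in> set ws"] that(1) by simp
    from sorted_wrt_subseq[OF this that(2)] \<open>u < v\<close> show False
      by simp
  qed
  have "u \<in> set xs \<union> set ys" "v \<in> set xs \<union> set ys"
    using set_mono_subseq[OF assms(5)] set_shuffles[OF assms(1)] by auto
  with not_both[OF filter_shuffles_disjoint1(1)[OF assms(2,1)] assms(3)]
    not_both[OF filter_shuffles_disjoint2(1)[OF assms(2,1)] assms(4)]
  show ?thesis by blast
qed

section \<open>Circular occurrences of 1234\<close>

definition contains_123 :: "'a::ord list \<Rightarrow> bool" where
  "contains_123 s \<longleftrightarrow> (\<exists>x y z. subseq [x,y,z] s \<and> x < y \<and> y < z)"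

definition contains_3412 :: "'a::ord list \<Rightarrow> bool" where
  "contains_3412 s \<longleftrightarrow> (\<exists>x y z u. subseq [z,u,x,y] s \<and> x < y \<and> y < z \<and> z < u)"

lemma reduced_form_eq_1234_iff:
  "reduced_form ys = [1,2,3,4] \<longleftrightarrow> (\<exists>a b c d. ys = [a,b,c,d] \<and> a < b \<and> b < c \<and> c < d)"
proof
  assume rf: "reduced_form ys = [1,2,3,4]"
  have "length ys = length (reduced_form ys)" by (simp add: reduced_form_def)
  then have "length ys = 4" by (simp add: rf)
  then obtain a b c d where ys: "ys = [a,b,c,d]"
    by (auto simp: length_Suc_conv numeral_eq_Suc)
  define rank where "rank x = card {y \<in> set ys. y \<le> x}" for x
  have ranks: "rank a = 1" "rank b = 2" "rank c = 3" "rank d = 4"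
    using rf unfolding ys reduced_form_def rank_def by simp_all
  have rank_mono: "rank x \<le> rank y" if "x \<le> y" for x y
    unfolding rank_def using that by (intro card_mono) auto
  have "a < b" "b < c" "c < d"
    using rank_mono[of b a] rank_mono[of c b] rank_mono[of d c] ranks by force+
  with ys show "\<exists>a b c d. ys = [a,b,c,d] \<and> a < b \<and> b < c \<and> c < d" by blast
next
  assume "\<exists>a b c d. ys = [a,b,c,d] \<and> a < b \<and> b < c \<and> c < d"
  then obtain a b c d where ys: "ys = [a,b,c,d]" and "a < b" "b < c" "c < d" by blast
  then have "{y \<in> set ys. y \<le> a} = {a}" "{y \<in> set ys. y \<le> b} = {a,b}"
    "{y \<in> set ys. y \<le> c} = {a,b,c}" "{y \<in> set ys. y \<le> d} = {a,b,c,d}"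
    by auto
  with \<open>a < b\<close> \<open>b < c\<close> \<open>c < d\<close> show "reduced_form ys = [1,2,3,4]"
    unfolding reduced_form_def by (simp add: ys)
qed

lemma circ_occurs_1234_iff:
  "circ_occurs [1,2,3,4] p \<longleftrightarrow>
     (\<exists>k a b c d. subseq [a,b,c,d] (rotate k p) \<and> a < b \<and> b < c \<and> c < d)"
  unfolding circ_occurs_def in_set_subseqs reduced_form_eq_1234_iff by blast

lemma contains_123_or_3412_if_circ_occurs_1234:
  assumes below: "\<forall>x\<in>set s. x < n" and "circ_occurs [1,2,3,4] (s @ [n])"
  shows "contains_123 s \<or> contains_3412 s"
proof -
  from assms(2) obtain k a b c d where occ: "subseq [a,b,c,d] (rotate k (s @ [n]))"
    and abcd: "a < b" "b < c" "c < d"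
    unfolding circ_occurs_1234_iff by blast
  from occ obtain j where "subseq (rotate j [a,b,c,d]) (s @ [n])" by (rule subseq_rotateE)
  then consider "subseq (rotate j [a,b,c,d]) s"
    | w where "rotate j [a,b,c,d] = w @ [n]" "subseq w s"
    unfolding subseq_snoc_iff by blast
  then show ?thesis
  proof cases
    case 1
    have drop_one: "subseq [a,b,c] [a,b,c,d]" "subseq [b,c,d] [b,c,d,a]" "subseq [a,b,c] [d,a,b,c]"
      by (simp_all add: list_emb_Cons)
    from 1 rotate_four_cases[of j a b c d] have
      "subseq [a,b,c,d] s \<or> subseq [b,c,d,a] s \<or> subseq [c,d,a,b] s \<or> subseq [d,a,b,c] s"
      by (elim insertE) auto
    then have "subseq [a,b,c] s \<or> subseq [b,c,d] s \<or> subseq [c,d,a,b] s"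
      using drop_one[THEN subseq_order.trans] by blast
    with abcd show ?thesis
      unfolding contains_123_def contains_3412_def by blast
  next
    case (2 w)
    text \<open>The letter \<open>n\<close> exceeds all of \<open>s\<close>, so it is \<open>d\<close>, which ends only the trivial rotation.\<close>
    have "n \<in> set (rotate j [a,b,c,d])"
      by (simp add: 2(1))
    then have "n \<le> d"
      using abcd by auto
    moreover have "d \<notin> set w"
      using below set_mono_subseq[OF 2(2)] \<open>n \<le> d\<close> by fastforce
    ultimately have "w = [a,b,c]"
      using rotate_four_cases[of j a b c d] 2(1) abcd by (auto simp: append_eq_Cons_conv)
    with 2(2) abcd show ?thesis
      unfolding contains_123_def by blast
  qed
qed

lemma circ_occurs_1234_if_contains_123:
  assumes "\<forall>x\<in>set s. x < n" "contains_123 s"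
  shows "circ_occurs [1,2,3,4] (s @ [n])"
proof -
  from assms(2) obtain a b c where abc: "subseq [a,b,c] s" "a < b" "b < c"
    unfolding contains_123_def by blast
  then have "c < n"
    using assms(1) by (auto dest: set_mono_subseq)
  moreover have "subseq [a,b,c,n] (rotate 0 (s @ [n]))"
    using list_emb_append_mono[OF abc(1), of "[n]" "[n]"] by simp
  ultimately show ?thesis
    using abc unfolding circ_occurs_1234_iff by blast
qed

lemma circ_occurs_1234_if_contains_3412:
  assumes "contains_3412 s"
  shows "circ_occurs [1,2,3,4] (s @ [n])"
proof -
  from assms obtain a b c d where occ: "subseq ([c,d] @ [a,b]) s" and abcd: "a < b" "b < c" "c < d"
    unfolding contains_3412_def by auto
  from list_emb_appendD[OF occ] obtain u v where uv: "s = u @ v" "subseq [c,d] u" "subseq [a,b] v"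
    by blast
  have "rotate (length u) (s @ [n]) = (v @ [n]) @ u"
    by (simp add: uv(1) rotate_append)
  moreover have "subseq ([a,b] @ [c,d]) ((v @ [n]) @ u)"
    using uv by (intro list_emb_append_mono) (auto intro: subseq_rev_drop_many)
  ultimately show ?thesis
    using abcd unfolding circ_occurs_1234_iff by (metis append_Cons append_Nil)
qed

lemma circ_occurs_1234_snoc_iff:
  "\<forall>x\<in>set s. x < n \<Longrightarrow> circ_occurs [1,2,3,4] (s @ [n]) \<longleftrightarrow> contains_123 s \<or> contains_3412 s"
  using contains_123_or_3412_if_circ_occurs_1234 circ_occurs_1234_if_contains_123
    circ_occurs_1234_if_contains_3412 by blast

section \<open>Permutations avoiding 123 and 3412, split at the maximum\<close>

definition ascents_straddle :: "'a::ord set \<Rightarrow> 'a list \<Rightarrow> bool" where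
  "ascents_straddle A b \<longleftrightarrow> (\<forall>x y. subseq [x,y] b \<longrightarrow> x < y \<longrightarrow> (\<forall>z\<in>A. x < z \<and> z < y))"

lemma ascents_straddle_if_decreasing:
  "sorted_wrt (>) b \<Longrightarrow> ascents_straddle A (b :: 'a::order list)"
  unfolding ascents_straddle_def sorted_wrt_iff_subseq_pairs by fastforce

lemma subseq_Cons_max:
  fixes m :: "'a::order"
  assumes "\<forall>v\<in>set b. v < m" "subseq (x # y # r) (m # b)" "x < y"
  shows "subseq (x # y # r) b"
proof (cases "x = m")
  case True
  with assms(2) have "y \<in> set b"
    by (auto simp: subseq_singleton_left dest: set_mono_subseq)
  with assms(1) have "y < m" by blast
  with assms(3) True show ?thesis
    using less_asym by blast
qed (use assms(2) in simp)

lemma contains_Cons_max_iff: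
  fixes m :: "'a::order"
  assumes "\<forall>v\<in>set b. v < m"
  shows "contains_123 (m # b) \<longleftrightarrow> contains_123 b"
    and "contains_3412 (m # b) \<longleftrightarrow> contains_3412 b"
  unfolding contains_123_def contains_3412_def
  using subseq_Cons_max[OF assms] by (meson list_emb_Cons)+

lemma subseq_ascent_append_decreasing:
  fixes x y :: "'a::order"
  assumes "sorted_wrt (>) a" "subseq (x # y # r) (a @ c)" "x < y"
  shows "x \<in> set a \<and> subseq (y # r) c \<or> subseq (x # y # r) c"
proof -
  from assms(2) obtain w1 w2 where w: "x # y # r = w1 @ w2" "subseq w1 a" "subseq w2 c"
    by (rule subseq_appendE)
  then consider "w1 = []" | "w1 = [x]" "w2 = y # r" | w' where "w1 = x # y # w'"
    by (auto simp: Cons_eq_append_conv)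
  then show ?thesis
  proof cases
    case 3
    with w(2) have "sorted_wrt (>) (x # y # w')"
      using sorted_wrt_subseq assms(1) by blast
    then have "y < x" by simp
    with assms(3) show ?thesis by (meson order.asym)
  qed (use w in \<open>auto simp: subseq_singleton_left\<close>)
qed

lemma decreasing_if_not_contains_123:
  fixes m :: "'a::linorder"
  assumes "\<not> contains_123 (a @ m # b)" "distinct a" "\<forall>v\<in>set a. v < m"
  shows "sorted_wrt (>) a"
  unfolding sorted_wrt_iff_subseq_pairs
proof (intro allI impI)
  fix x y assume xy: "subseq [x,y] a"
  have "x \<noteq> y"
    using subseq_pair_distinct[OF xy] assms(2) by simp
  moreover have "y < m"
    using assms(3) set_mono_subseq[OF xy] by auto
  moreover have "subseq [x,y,m] (a @ m # b)"
    using list_emb_append_mono[OF xy, of "[m]" "m # b"] by simp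
  ultimately show "y < x"
    using assms(1) unfolding contains_123_def by (meson linorder_neqE)
qed

lemma ascents_straddle_if_avoids:
  fixes m :: "'a::linorder"
  assumes "\<not> contains_123 (a @ m # b)" "\<not> contains_3412 (a @ m # b)"
    and "distinct (a @ m # b)" "\<forall>v\<in>set a. v < m"
  shows "ascents_straddle (set a) b"
  unfolding ascents_straddle_def
proof (intro allI impI ballI)
  fix x y z assume xy: "subseq [x,y] b" "x < y" and z: "z \<in> set a"
  have "z \<noteq> x" "z \<noteq> y" "z < m"
    using set_mono_subseq[OF xy(1)] z assms(3,4) by auto
  have "subseq [z] a"
    using z by (simp add: subseq_singleton_left)
  have "subseq [z,x,y] (a @ m # b)"
    using list_emb_append_mono[OF \<open>subseq [z] a\<close> list_emb_Cons[OF xy(1)]]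
    by (simp only: append_Cons append_Nil)
  with assms(1) xy(2) have "\<not> z < x"
    unfolding contains_123_def by blast
  have "subseq [z,m,x,y] (a @ m # b)"
    using list_emb_append_mono[OF \<open>subseq [z] a\<close> subseq_Cons2[OF xy(1)]]
    by (simp only: append_Cons append_Nil)
  with assms(2) xy(2) \<open>z < m\<close> have "\<not> y < z"
    unfolding contains_3412_def by blast
  with \<open>\<not> z < x\<close> \<open>z \<noteq> x\<close> \<open>z \<noteq> y\<close> show "x < z \<and> z < y"
    by auto
qed

lemma not_contains_123_if_straddle:
  fixes m :: "'a::linorder"
  assumes "sorted_wrt (>) a" "ascents_straddle (set a) b" "a \<noteq> []" "\<forall>v\<in>set b. v < m"
  shows "\<not> contains_123 (a @ m # b)"
proof
  have straddle: "x < z \<and> z < y" if "subseq [x,y] b" "x < y" "z \<in> set a" for x y z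
    using assms(2) that unfolding ascents_straddle_def by blast
  assume "contains_123 (a @ m # b)"
  then obtain x y z where occ: "subseq [x,y,z] (a @ m # b)" "x < y" "y < z"
    unfolding contains_123_def by blast
  from subseq_ascent_append_decreasing[OF assms(1) occ(1,2)] show False
  proof
    assume "x \<in> set a \<and> subseq [y,z] (m # b)"
    with straddle[OF subseq_Cons_max[OF assms(4) _ occ(3)] occ(3)] occ(2) show False
      by fastforce
  next
    assume "subseq [x,y,z] (m # b)"
    then have xyz: "subseq [x,y,z] b"
      using subseq_Cons_max[OF assms(4) _ occ(2)] by blast
    then have "subseq [x,y] b"
      using subseq_order.trans[of "[x,y]" "[x,y,z]" b] by simp
    with straddle[OF _ occ(2) hd_in_set] straddle[OF subseq_Cons'[OF xyz] occ(3) hd_in_set] assms(3)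
    show False
      by fastforce
  qed
qed

lemma not_contains_3412_if_straddle:
  fixes m :: "'a::linorder"
  assumes "sorted_wrt (>) a" "ascents_straddle (set a) b" "a \<noteq> []" "\<forall>v\<in>set b. v < m"
  shows "\<not> contains_3412 (a @ m # b)"
proof
  have straddle: "x < z \<and> z < y" if "subseq [x,y] b" "x < y" "z \<in> set a" for x y z
    using assms(2) that unfolding ascents_straddle_def by blast
  assume "contains_3412 (a @ m # b)"
  then obtain x y z u where occ: "subseq [z,u,x,y] (a @ m # b)" "x < y" "y < z" "z < u"
    unfolding contains_3412_def by blast
  from subseq_ascent_append_decreasing[OF assms(1) occ(1,4)] show False
  proof
    assume "z \<in> set a \<and> subseq [u,x,y] (m # b)"
    with straddle[OF subseq_Cons_max[OF assms(4) subseq_Cons' occ(2)] occ(2)] occ(3) show False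
      by fastforce
  next
    assume "subseq [z,u,x,y] (m # b)"
    then have zuxy: "subseq [z,u,x,y] b"
      using subseq_Cons_max[OF assms(4) _ occ(4)] by blast
    then have "subseq [z,u] b"
      using subseq_order.trans[of "[z,u]" "[z,u,x,y]" b] by simp
    with straddle[OF _ occ(4) hd_in_set] straddle[OF subseq_Cons'[OF subseq_Cons'[OF zuxy]] occ(2) hd_in_set]
      occ(3) assms(3)
    show False
      by fastforce
  qed
qed

lemma avoids_iff_decreasing_straddle:
  fixes m :: "'a::linorder"
  assumes "distinct (a @ m # b)" "\<forall>v \<in> set a \<union> set b. v < m" "a \<noteq> []"
  shows "\<not> contains_123 (a @ m # b) \<and> \<not> contains_3412 (a @ m # b) \<longleftrightarrow>
         sorted_wrt (>) a \<and> ascents_straddle (set a) b"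
  using assms decreasing_if_not_contains_123 ascents_straddle_if_avoids
    not_contains_123_if_straddle not_contains_3412_if_straddle
  by (metis Un_iff distinct_append)

lemma ascents_straddle_imp_interval:
  fixes A :: "'a::linorder set"
  assumes straddle: "ascents_straddle A b" and xy: "subseq [x,y] b" "x < y"
    and "finite A" "A \<noteq> {}" and gaps: "{Min A..Max A} \<subseteq> A \<union> set b"
  shows "A = {Min A..Max A}"
proof (rule ccontr)
  have straddles: "u < Min A \<and> Max A < v" if "subseq [u,v] b" "u < v" for u v
    using straddle that Min_in[OF \<open>finite A\<close> \<open>A \<noteq> {}\<close>] Max_in[OF \<open>finite A\<close> \<open>A \<noteq> {}\<close>]
    unfolding ascents_straddle_def by blast
  assume "A \<noteq> {Min A..Max A}"
  moreover have "A \<subseteq> {Min A..Max A}"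
    using \<open>finite A\<close> by auto
  ultimately obtain z where "z \<in> {Min A..Max A}" "z \<notin> A"
    by blast
  then have z: "Min A \<le> z" "z \<le> Max A" "z \<notin> A"
    by auto
  with gaps have "z \<in> set b" by auto
  moreover have "z \<noteq> x" "z \<noteq> y"
    using z straddles[OF xy] by auto
  ultimately have "subseq [z,y] b \<or> subseq [x,z] b"
    using subseq_pair_replace[OF xy(1)] by blast
  moreover have "x < z" "z < y"
    using z straddles[OF xy] by auto
  ultimately show False
    using straddles z by fastforce
qed

lemma ascents_straddle_imp_interval_shuffle:
  assumes "a \<noteq> []" and parts: "set a \<union> set b = {1..<m}" "set a \<inter> set b = {}"
    and "distinct b" and straddle: "ascents_straddle (set a) b" and "\<not> sorted_wrt (>) b"
  obtains lo hi where "1 \<le> lo" "lo \<le> hi" "hi < m" "set a = {lo..hi}"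
    "b \<in> shuffles (rev [1..<lo]) (rev [Suc hi..<m])"
proof -
  define lo where "lo = Min (set a)"
  define hi where "hi = Max (set a)"
  have ne: "set a \<noteq> {}"
    using \<open>a \<noteq> []\<close> by simp
  have "lo \<in> set a" "hi \<in> set a"
    unfolding lo_def hi_def using ne by simp_all
  then have range: "1 \<le> lo" "lo \<le> hi" "hi < m"
    using parts(1) Min_le[OF finite_set] unfolding lo_def hi_def by auto
  obtain x y where xy: "subseq [x,y] b" "x < y"
    using \<open>\<not> sorted_wrt (>) b\<close> subseq_pair_distinct[OF _ \<open>distinct b\<close>]
    unfolding sorted_wrt_iff_subseq_pairs by (meson linorder_neqE_nat)
  have "{lo..hi} \<subseteq> set a \<union> set b"
    using range parts(1) by auto
  then have interval: "set a = {lo..hi}"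
    unfolding lo_def hi_def by (rule ascents_straddle_imp_interval[OF straddle xy finite_set ne])
  have set_b: "set b = {1..<m} - {lo..hi}"
    using parts unfolding interval by blast
  from \<open>lo \<in> set a\<close> \<open>hi \<in> set a\<close> have straddles: "u < lo \<and> hi < v" if "subseq [u,v] b" "u < v" for u v
    using straddle that unfolding ascents_straddle_def by blast
  have "filter (\<lambda>v. v < lo) b = rev [1..<lo]"
    using straddles set_b range by (intro filter_eq_rev_upt[OF \<open>distinct b\<close>]) force+
  moreover have "filter (\<lambda>v. \<not> v < lo) b = rev [Suc hi..<m]"
    using straddles set_b range by (intro filter_eq_rev_upt[OF \<open>distinct b\<close>]) force+
  ultimately show thesis
    using that[OF range interval] partition_in_shuffles[of b "\<lambda>v. v < lo"] by simp
qed

section \<open>Enumeration\<close>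

definition av_123_3412 :: "nat \<Rightarrow> nat list set" where
  "av_123_3412 m = {s. distinct s \<and> set s = {1..m} \<and> \<not> contains_123 s \<and> \<not> contains_3412 s}"

definition two_runs :: "nat \<Rightarrow> nat list set" where
  "two_runs m = (\<lambda>A. rev (sorted_list_of_set A) @ m # rev (sorted_list_of_set ({1..<m} - A)))
                  ` (Pow {1..<m} - {{}})"

text \<open>Here \<open>q\<close> is the length of the part after \<open>m\<close> and \<open>l\<close> the number of its letters below
  the interval \<open>{l + 1..<m - q + l}\<close> that precedes \<open>m\<close>.\<close>

definition interval_shuffles_at :: "nat \<Rightarrow> nat \<Rightarrow> nat \<Rightarrow> nat list set" where
  "interval_shuffles_at m q l = (\<lambda>b. rev [Suc l..<m - q + l] @ m # b)
     ` (shuffles (rev [m - q + l..<m]) (rev [1..<Suc l]) - {b. sorted_wrt (>) b})"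

definition interval_shuffles :: "nat \<Rightarrow> nat list set" where
  "interval_shuffles m = (\<Union>(q, l) \<in> Sigma {..<m - 1} (\<lambda>q. {..q}). interval_shuffles_at m q l)"

lemma two_runsE:
  assumes "s \<in> two_runs m"
  obtains a b where "s = a @ m # b" "a \<noteq> []" "m \<notin> set a" "m \<notin> set b" "sorted_wrt (>) b"
proof -
  from assms obtain A where A: "A \<subseteq> {1..<m}" "A \<noteq> {}"
    and s: "s = rev (sorted_list_of_set A) @ m # rev (sorted_list_of_set ({1..<m} - A))"
    unfolding two_runs_def by blast
  have "finite A"
    using A(1) finite_subset by blast
  show thesis
  proof (rule that[OF s])
    show "rev (sorted_list_of_set A) \<noteq> []" "m \<notin> set (rev (sorted_list_of_set A))"
      using \<open>finite A\<close> A by auto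
  qed (simp_all add: sorted_wrt_rev)
qed

lemma interval_shufflesE:
  assumes "s \<in> interval_shuffles m"
  obtains a b where "s = a @ m # b" "a \<noteq> []" "m \<notin> set a" "m \<notin> set b" "\<not> sorted_wrt (>) b"
proof -
  from assms obtain q l b where ql: "q < m - 1" "l \<le> q"
    and b: "b \<in> shuffles (rev [m - q + l..<m]) (rev [1..<Suc l])" "\<not> sorted_wrt (>) b"
    and s: "s = rev [Suc l..<m - q + l] @ m # b"
    unfolding interval_shuffles_def interval_shuffles_at_def by blast
  have "m \<notin> set b"
    using set_shuffles[OF b(1)] ql by (auto simp del: upt_Suc)
  show thesis
  proof (rule that[OF s _ _ \<open>m \<notin> set b\<close> b(2)])
    show "rev [Suc l..<m - q + l] \<noteq> []" "m \<notin> set (rev [Suc l..<m - q + l])"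
      using ql by auto
  qed
qed

lemma append_Cons_in_av_123_3412_iff:
  assumes "a \<noteq> []"
  shows "a @ m # b \<in> av_123_3412 m \<longleftrightarrow>
    distinct b \<and> set a \<union> set b = {1..<m} \<and> set a \<inter> set b = {} \<and>
    sorted_wrt (>) a \<and> ascents_straddle (set a) b"
proof
  assume s: "a @ m # b \<in> av_123_3412 m"
  then have dist: "distinct (a @ m # b)" and set_s: "set (a @ m # b) = {1..m}"
    and avoids: "\<not> contains_123 (a @ m # b) \<and> \<not> contains_3412 (a @ m # b)"
    unfolding av_123_3412_def by blast+
  then have parts: "set a \<union> set b = {1..<m}"
    by fastforce
  then have "\<forall>v \<in> set a \<union> set b. v < m"
    by auto
  with avoids have "sorted_wrt (>) a \<and> ascents_straddle (set a) b"
    using avoids_iff_decreasing_straddle[OF dist _ assms] by blast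
  moreover have "distinct b" "set a \<inter> set b = {}"
    using dist by auto
  ultimately show "distinct b \<and> set a \<union> set b = {1..<m} \<and> set a \<inter> set b = {} \<and>
      sorted_wrt (>) a \<and> ascents_straddle (set a) b"
    using parts by blast
next
  assume conds: "distinct b \<and> set a \<union> set b = {1..<m} \<and> set a \<inter> set b = {} \<and>
    sorted_wrt (>) a \<and> ascents_straddle (set a) b"
  then have dist: "distinct (a @ m # b)"
    using distinct_if_sorted_wrt_greater by fastforce
  have "set a \<noteq> {}"
    using assms by simp
  with conds have "set (a @ m # b) = {1..m}"
    by auto
  moreover have "\<forall>v \<in> set a \<union> set b. v < m"
    using conds by auto
  then have "\<not> contains_123 (a @ m # b) \<and> \<not> contains_3412 (a @ m # b)"
    using avoids_iff_decreasing_straddle[OF dist _ assms] conds by blast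
  ultimately show "a @ m # b \<in> av_123_3412 m"
    using dist unfolding av_123_3412_def by blast
qed

lemma Cons_in_av_123_3412_iff:
  assumes "m \<ge> 1"
  shows "m # b \<in> av_123_3412 m \<longleftrightarrow> b \<in> av_123_3412 (m - 1)"
proof -
  have interval: "{1..m} = insert m {1..m - 1}" "m \<notin> {1..m - 1}"
    using assms by auto
  then have perm: "distinct (m # b) \<and> set (m # b) = {1..m} \<longleftrightarrow> distinct b \<and> set b = {1..m - 1}"
    by auto
  have "\<forall>v\<in>set b. v < m" if "set b = {1..m - 1}"
    using that assms by auto
  with perm show ?thesis
    unfolding av_123_3412_def using contains_Cons_max_iff by blast
qed

lemma two_runs_subset: "two_runs m \<subseteq> av_123_3412 m"
proof
  fix s assume "s \<in> two_runs m"
  then obtain A where A: "A \<subseteq> {1..<m}" "A \<noteq> {}"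
    and s: "s = rev (sorted_list_of_set A) @ m # rev (sorted_list_of_set ({1..<m} - A))"
    unfolding two_runs_def by blast
  have "finite A"
    using A(1) finite_subset by blast
  with A show "s \<in> av_123_3412 m"
    unfolding s by (subst append_Cons_in_av_123_3412_iff)
      (auto simp: sorted_wrt_rev intro: ascents_straddle_if_decreasing)
qed

lemma interval_shuffles_subset: "interval_shuffles m \<subseteq> av_123_3412 m"
proof
  fix s assume "s \<in> interval_shuffles m"
  then obtain q l b where ql: "q < m - 1" "l \<le> q"
    and b: "b \<in> shuffles (rev [m - q + l..<m]) (rev [1..<Suc l])"
    and s: "s = rev [Suc l..<m - q + l] @ m # b"
    unfolding interval_shuffles_def interval_shuffles_at_def by blast
  have set_b: "set b = {m - q + l..<m} \<union> {1..<Suc l}"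
    using set_shuffles[OF b] by (simp del: upt_Suc)
  have disjoint: "set (rev [m - q + l..<m]) \<inter> set (rev [1..<Suc l]) = {}"
    using ql by (auto simp del: upt_Suc)
  have decreasing: "sorted_wrt (>) (rev [m - q + l..<m])" "sorted_wrt (>) (rev [1..<Suc l])"
    by (simp_all add: sorted_wrt_rev del: upt_Suc)
  have "ascents_straddle {Suc l..<m - q + l} b"
    unfolding ascents_straddle_def
  proof (intro allI impI ballI)
    fix x y z assume xy: "subseq [x,y] b" "x < y" and z: "z \<in> {Suc l..<m - q + l}"
    from ascent_in_shuffles[OF b disjoint decreasing xy]
    have "x \<in> {m - q + l..<m} \<and> y \<in> {1..<Suc l} \<or> x \<in> {1..<Suc l} \<and> y \<in> {m - q + l..<m}"
      by (simp del: upt_Suc)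
    with xy(2) z show "x < z \<and> z < y"
      by auto
  qed
  moreover have "distinct b"
    using distinct_disjoint_shuffles[OF _ _ disjoint b] by simp
  ultimately show "s \<in> av_123_3412 m"
    using ql set_b unfolding s by (subst append_Cons_in_av_123_3412_iff) (auto simp: sorted_wrt_rev)
qed

lemma decreasing_tail_in_two_runs:
  assumes "a \<noteq> []" "set a \<union> set b = {1..<m}" "set a \<inter> set b = {}"
    and "sorted_wrt (>) a" "sorted_wrt (>) b"
  shows "a @ m # b \<in> two_runs m"
proof -
  have "rev (sorted_list_of_set (set a)) = a"
    by (rule sorted_wrt_greater_unique) (simp_all add: sorted_wrt_rev assms(4))
  moreover have "set b = {1..<m} - set a"
    using assms(2,3) by blast
  then have "rev (sorted_list_of_set ({1..<m} - set a)) = b"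
    by (intro sorted_wrt_greater_unique) (simp_all add: sorted_wrt_rev assms(5))
  moreover have "set a \<in> Pow {1..<m} - {{}}"
    using assms(1,2) by auto
  ultimately show ?thesis
    unfolding two_runs_def by force
qed

lemma interval_shuffle_in_interval_shuffles:
  assumes "1 \<le> lo" "lo \<le> hi" "hi < m" "a = rev [lo..<Suc hi]"
    and "b \<in> shuffles (rev [1..<lo]) (rev [Suc hi..<m])" "\<not> sorted_wrt (>) b"
  shows "a @ m # b \<in> interval_shuffles m"
proof -
  define l where "l = lo - 1"
  define q where "q = l + (m - Suc hi)"
  have ql: "q < m - 1" "l \<le> q" and bounds: "Suc l = lo" "m - q + l = Suc hi"
    using assms(1-3) unfolding l_def q_def by auto
  have "a @ m # b \<in> interval_shuffles_at m q l"
    unfolding interval_shuffles_at_def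
    using assms(4-6) by (simp add: bounds shuffles_commutes del: upt_Suc)
  with ql show ?thesis
    unfolding interval_shuffles_def by (intro UN_I[of "(q, l)"]) auto
qed

lemma av_123_3412_eq:
  assumes "m \<ge> 1"
  shows "av_123_3412 m = Cons m ` av_123_3412 (m - 1) \<union> two_runs m \<union> interval_shuffles m"
proof (intro equalityI Un_least subsetI)
  fix s assume s: "s \<in> av_123_3412 m"
  then have "m \<in> set s"
    using assms unfolding av_123_3412_def by auto
  then obtain a b where split: "s = a @ m # b"
    by (meson split_list)
  show "s \<in> Cons m ` av_123_3412 (m - 1) \<union> two_runs m \<union> interval_shuffles m"
  proof (cases "a = []")
    case True
    then show ?thesis
      using s split Cons_in_av_123_3412_iff[OF assms] by auto
  next
    case False
    with s split have conds: "distinct b" "set a \<union> set b = {1..<m}" "set a \<inter> set b = {}"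
      "sorted_wrt (>) a" "ascents_straddle (set a) b"
      using append_Cons_in_av_123_3412_iff by blast+
    show ?thesis
    proof (cases "sorted_wrt (>) b")
      case True
      then show ?thesis
        using decreasing_tail_in_two_runs[OF False conds(2-4)] split by blast
    next
      case not_decreasing: False
      obtain lo hi where range: "1 \<le> lo" "lo \<le> hi" "hi < m" and a: "set a = {lo..hi}"
        and b: "b \<in> shuffles (rev [1..<lo]) (rev [Suc hi..<m])"
        using ascents_straddle_imp_interval_shuffle[OF False conds(2,3,1,5) not_decreasing] .
      have "a = rev [lo..<Suc hi]"
        by (rule sorted_wrt_greater_unique)
          (simp_all add: sorted_wrt_rev conds a atLeastLessThanSuc_atLeastAtMost del: upt_Suc)
      then show ?thesis
        using interval_shuffle_in_interval_shuffles[OF range _ b not_decreasing] split by blast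
    qed
  qed
qed (use Cons_in_av_123_3412_iff[OF assms] two_runs_subset[of m] interval_shuffles_subset[of m] in auto)

lemma finite_av_123_3412: "finite (av_123_3412 m)"
proof (rule finite_subset)
  show "av_123_3412 m \<subseteq> {s. set s \<subseteq> {1..m} \<and> length s = m}"
    unfolding av_123_3412_def by (auto dest: distinct_card)
qed (simp add: finite_lists_length_eq)

lemma append_Cons_notin_Cons_image: "a \<noteq> [] \<Longrightarrow> m \<notin> set a \<Longrightarrow> a @ m # b \<notin> Cons m ` X"
  by (cases a) auto

lemma card_two_runs: "card (two_runs m) = 2 ^ (m - 1) - 1"
proof -
  let ?runs = "\<lambda>A. rev (sorted_list_of_set A) @ m # rev (sorted_list_of_set ({1..<m} - A))"
  have "inj_on ?runs (Pow {1..<m} - {{}})"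
  proof (rule inj_onI)
    fix A B assume AB: "A \<in> Pow {1..<m} - {{}}" "B \<in> Pow {1..<m} - {{}}" and "?runs A = ?runs B"
    moreover have "finite A" "finite B"
      using AB finite_subset by auto
    ultimately have "rev (sorted_list_of_set A) = rev (sorted_list_of_set B)"
      by (subst (asm) append_Cons_eq_iff) auto
    with \<open>finite A\<close> \<open>finite B\<close> show "A = B"
      by (metis set_rev sorted_list_of_set.set_sorted_key_list_of_set)
  qed
  then have "card (two_runs m) = card (Pow {1..<m} - {{}})"
    unfolding two_runs_def by (rule card_image)
  also have "\<dots> = 2 ^ (m - 1) - 1"
    by (simp add: card_Pow)
  finally show ?thesis .
qed

lemma card_interval_shuffles_at:
  assumes "q < m - 1" "l \<le> q"
  shows "card (interval_shuffles_at m q l) = (q choose l) - 1"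
proof -
  have "sorted_wrt (>) (rev [m - q + l..<m] @ rev [1..<Suc l])"
    using assms by (auto simp: sorted_wrt_append sorted_wrt_rev simp del: upt_Suc)
  then have "card (shuffles (rev [m - q + l..<m]) (rev [1..<Suc l]) - {b. sorted_wrt (>) b})
      = (q choose (q - l)) - 1"
    using assms by (simp add: card_shuffles_not_decreasing del: upt_Suc)
  then show ?thesis
    unfolding interval_shuffles_at_def using assms
    by (simp add: card_image inj_on_def binomial_symmetric[symmetric] del: upt_Suc)
qed

lemma interval_shuffles_at_disjoint:
  assumes ql: "q < m - 1" "l \<le> q" "q' < m - 1" "l' \<le> q'" and "(q, l) \<noteq> (q', l')"
  shows "interval_shuffles_at m q l \<inter> interval_shuffles_at m q' l' = {}"
proof (rule ccontr)
  assume "interval_shuffles_at m q l \<inter> interval_shuffles_at m q' l' \<noteq> {}"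
  then obtain b b' where eq: "rev [Suc l..<m - q + l] @ m # b = rev [Suc l'..<m - q' + l'] @ m # b'"
    and b: "b \<in> shuffles (rev [m - q + l..<m]) (rev [1..<Suc l])"
    unfolding interval_shuffles_at_def by auto
  have "m \<notin> set b"
    using set_shuffles[OF b] ql by (auto simp del: upt_Suc)
  with eq have "rev [Suc l..<m - q + l] = rev [Suc l'..<m - q' + l']"
    using ql by (subst (asm) append_Cons_eq_iff) auto
  then have intervals: "{Suc l..<m - q + l} = {Suc l'..<m - q' + l'}"
    by (metis set_rev set_upt)
  have "Suc l = Suc l'" "m - q + l = m - q' + l'"
    using atLeastLessThan_inj[OF intervals] ql by auto
  with ql \<open>(q, l) \<noteq> (q', l')\<close> show False
    by auto
qed

lemma card_interval_shuffles:
  "card (interval_shuffles m) = (\<Sum>q<m - 1. \<Sum>l\<le>q. (q choose l) - 1)"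
proof -
  define I where "I = Sigma {..<m - 1} (\<lambda>q. {..q})"
  have "finite I"
    unfolding I_def by simp
  moreover have "\<forall>i\<in>I. finite (case_prod (interval_shuffles_at m) i)"
    by (auto simp: interval_shuffles_at_def split: prod.splits)
  moreover have "\<forall>i\<in>I. \<forall>j\<in>I. i \<noteq> j \<longrightarrow>
      case_prod (interval_shuffles_at m) i \<inter> case_prod (interval_shuffles_at m) j = {}"
    unfolding I_def using interval_shuffles_at_disjoint by auto
  ultimately have "card (interval_shuffles m) = (\<Sum>i\<in>I. card (case_prod (interval_shuffles_at m) i))"
    unfolding interval_shuffles_def I_def[symmetric] by (rule card_UN_disjoint)
  also have "\<dots> = (\<Sum>(q, l)\<in>I. (q choose l) - 1)"
    by (rule sum.cong) (auto simp: I_def card_interval_shuffles_at)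
  also have "\<dots> = (\<Sum>q<m - 1. \<Sum>l\<le>q. (q choose l) - 1)"
    unfolding I_def by (rule sum.Sigma[symmetric]) auto
  finally show ?thesis .
qed

lemma two_runs_interval_shuffles_disjoint: "two_runs m \<inter> interval_shuffles m = {}"
  unfolding disjoint_iff
proof (intro allI impI notI)
  fix s assume "s \<in> two_runs m" "s \<in> interval_shuffles m"
  from \<open>s \<in> two_runs m\<close> obtain a b where "s = a @ m # b" "m \<notin> set a" "m \<notin> set b"
    and "sorted_wrt (>) b"
    by (rule two_runsE)
  moreover from \<open>s \<in> interval_shuffles m\<close> obtain a' b' where "s = a' @ m # b'" "m \<notin> set a'"
    and "\<not> sorted_wrt (>) b'"
    by (rule interval_shufflesE)
  ultimately show False
    using append_Cons_eq_iff[of m a b a' b'] by auto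
qed

lemma card_av_123_3412_rec:
  assumes "m \<ge> 1"
  shows "card (av_123_3412 m) = card (av_123_3412 (m - 1)) + card (two_runs m) + card (interval_shuffles m)"
proof -
  have "s \<notin> Cons m ` av_123_3412 (m - 1)" if "s \<in> two_runs m \<union> interval_shuffles m" for s
  proof -
    from that obtain a b where "s = a @ m # b" "a \<noteq> []" "m \<notin> set a"
      by (auto elim: two_runsE interval_shufflesE)
    then show ?thesis
      using append_Cons_notin_Cons_image by simp
  qed
  then have Cons_disjoint: "Cons m ` av_123_3412 (m - 1) \<inter> two_runs m = {}"
    "Cons m ` av_123_3412 (m - 1) \<inter> interval_shuffles m = {}"
    by blast+
  have finite: "finite (Cons m ` av_123_3412 (m - 1))" "finite (two_runs m)" "finite (interval_shuffles m)"
    using finite_subset[OF two_runs_subset finite_av_123_3412]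
      finite_subset[OF interval_shuffles_subset finite_av_123_3412] finite_av_123_3412 by simp_all
  have "card (av_123_3412 m)
      = card (Cons m ` av_123_3412 (m - 1) \<union> two_runs m) + card (interval_shuffles m)"
    unfolding av_123_3412_eq[OF assms] using finite Cons_disjoint two_runs_interval_shuffles_disjoint[of m]
    by (intro card_Un_disjoint) auto
  also have "card (Cons m ` av_123_3412 (m - 1) \<union> two_runs m)
      = card (Cons m ` av_123_3412 (m - 1)) + card (two_runs m)"
    using finite Cons_disjoint by (intro card_Un_disjoint) auto
  also have "card (Cons m ` av_123_3412 (m - 1)) = card (av_123_3412 (m - 1))"
    by (simp add: card_image)
  finally show ?thesis .
qed

lemma int_sum_choose_minus_one: "int (\<Sum>l\<le>q. (q choose l) - 1) = 2 ^ q - int q - 1"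
proof -
  have "int (\<Sum>l\<le>q. (q choose l) - 1) = (\<Sum>l\<le>q. int (q choose l) - 1)"
    by (simp add: of_nat_diff Suc_leI zero_less_binomial)
  also have "\<dots> = 2 ^ q - int q - 1"
    by (simp add: sum_subtractf flip: of_nat_sum choose_row_sum)
  finally show ?thesis .
qed

lemma int_card_interval_shuffles:
  "int (card (interval_shuffles (Suc k))) = 2 ^ k - 1 - int (Suc k choose 2)"
proof (induction k)
  case (Suc k)
  have "Suc (Suc k) choose 2 = Suc k + (Suc k choose 2)"
    by (simp add: numeral_2_eq_2)
  with Suc.IH int_sum_choose_minus_one[of k] show ?case
    by (simp add: card_interval_shuffles)
qed (simp add: card_interval_shuffles)

lemma int_card_av_123_3412:
  "int (card (av_123_3412 m)) = 2 ^ Suc m + 1 - 2 * int (Suc m) - int (Suc m choose 3)"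
proof (induction m)
  case 0
  have "av_123_3412 0 = {[]}"
    unfolding av_123_3412_def contains_123_def contains_3412_def by auto
  then show ?case by simp
next
  case (Suc k)
  have "int (card (two_runs (Suc k))) = 2 ^ k - 1"
    using card_two_runs[of "Suc k"] by (simp add: of_nat_diff)
  moreover have "Suc (Suc k) choose 3 = (Suc k choose 2) + (Suc k choose 3)"
    by (simp add: numeral_3_eq_3 numeral_2_eq_2)
  ultimately show ?case
    using Suc.IH int_card_interval_shuffles[of k] card_av_123_3412_rec[of "Suc k"] by simp
qed

lemma circ_avoiding_1234_eq_image:
  assumes "n \<ge> 1"
  shows "{\<pi> \<in> circ_perms n. circ_avoids [1,2,3,4] \<pi>} = (\<lambda>s. s @ [n]) ` av_123_3412 (n - 1)"
proof -
  have "\<pi> \<in> circ_perms n \<and> circ_avoids [1,2,3,4] \<pi> \<longleftrightarrow> s \<in> av_123_3412 (n - 1)"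
    if "\<pi> = s @ [n]" for \<pi> s
  proof -
    have interval: "{1..n} = insert n {1..n - 1}" "n \<notin> {1..n - 1}"
      using assms by auto
    then have perm: "distinct \<pi> \<and> set \<pi> = {1..n} \<longleftrightarrow> distinct s \<and> set s = {1..n - 1}"
      unfolding that by auto
    have "\<forall>x\<in>set s. x < n" if "set s = {1..n - 1}"
      using that assms by auto
    with perm show ?thesis
      unfolding circ_perms_def circ_avoids_def av_123_3412_def that
      using circ_occurs_1234_snoc_iff by auto
  qed
  moreover have "\<exists>s. \<pi> = s @ [n]" if "\<pi> \<in> circ_perms n" for \<pi>
  proof -
    have "\<pi> \<noteq> []" "last \<pi> = n"
      using that assms unfolding circ_perms_def by auto
    then show ?thesis
      by (metis append_butlast_last_id)
  qed
  ultimately show ?thesis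
    by blast
qed

theorem theorem3:
  fixes n :: nat
  assumes "n \<ge> 1"
  shows "int (card {\<pi> \<in> circ_perms n. circ_avoids [1,2,3,4] \<pi>})
           = 2 ^ n + 1 - 2 * int n - int (n choose 3)"
proof -
  have "card {\<pi> \<in> circ_perms n. circ_avoids [1,2,3,4] \<pi>} = card (av_123_3412 (n - 1))"
    unfolding circ_avoiding_1234_eq_image[OF assms] by (rule card_image) (simp add: inj_on_def)
  with int_card_av_123_3412[of "n - 1"] assms show ?thesis
    by simp
qed

end
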